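(* Let $\rho_\lozenge=\rho(1/2,\sqrt{15}/2)$ be the planar unit rhombus with diagonals $1/2$ and $\sqrt{15}/2$, and let $2\rho_\lozenge$ be its dilation by factor $2$ (a planar rhombus with side length $2$ and diagonals $1$ and $\sqrt{15}$, regarded as a closed polygon with $8$ unit edges). If $2\rho_\lozenge$ cannot be domed, then the isosceles triangle with side lengths $(2,2,1)$ cannot be domed and $\rho_\lozenge$ cannot be domed.
   Context: A unit rhombus $\rho(a,b)$ is a closed polygon $[v_1v_2v_3v_4]$ in $\mathbb{R}^3$ with four sides of length $1$ and $|v_1v_3|=a$, $|v_2v_4|=b$. Polygons with integer side lengths are regarded as polygons with unit edges by subdividing each side into unit segments. A closed polygon with unit edges can be domed if there is a finite connected 2-dimensional simplicial complex which is a compact surface with a single boundary cycle, with a map to $\mathbb{R}^3$ linear on simplices sending each triangle to a unit equilateral triangle and the boundary cycle onto the polygon vertex by vertex in cyclic order. *)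

theory Defs
  imports "HOL-Analysis.Analysis"
begin

text \<open>A finite 2-dimensional simplicial complex is given by its set of triangles,
  each a 3-element set of (abstract) vertices; vertices are labelled by naturals.\<close>

definition cedges :: "nat set set \<Rightarrow> nat set set" where
  "cedges K = {e. \<exists>T\<in>K. e \<subseteq> T \<and> card e = 2}"

definition edge_degree :: "nat set set \<Rightarrow> nat set \<Rightarrow> nat" where
  "edge_degree K e = card {T\<in>K. e \<subseteq> T}"

definition boundary_edges :: "nat set set \<Rightarrow> nat set set" where
  "boundary_edges K = {e\<in>cedges K. edge_degree K e = 1}"

definition link_verts :: "nat set set \<Rightarrow> nat \<Rightarrow> nat set" where
  "link_verts K v = {a. {v, a} \<in> cedges K}"

definition link_adj :: "nat set set \<Rightarrow> nat \<Rightarrow> nat \<Rightarrow> nat \<Rightarrow> bool" where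
  "link_adj K v a b \<longleftrightarrow> {v, a, b} \<in> K \<and> a \<noteq> b \<and> a \<noteq> v \<and> b \<noteq> v"

text \<open>Compact connected combinatorial surface (possibly with boundary):
  pure 2-dimensional finite complex, every edge lies in one or two triangles,
  the link of every vertex is connected (hence a path or a cycle), and the
  complex is connected.\<close>
definition surface_complex :: "nat set set \<Rightarrow> bool" where
  "surface_complex K \<longleftrightarrow>
     finite K \<and> K \<noteq> {} \<and> (\<forall>T\<in>K. card T = 3) \<and>
     (\<forall>e\<in>cedges K. edge_degree K e \<le> 2) \<and>
     (\<forall>v\<in>\<Union>K. \<forall>a\<in>link_verts K v. \<forall>b\<in>link_verts K v. (link_adj K v)\<^sup>*\<^sup>* a b) \<and>
     (\<forall>u\<in>\<Union>K. \<forall>w\<in>\<Union>K. (\<lambda>x y. {x, y} \<in> cedges K)\<^sup>*\<^sup>* u w)"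

text \<open>A closed polygon with unit edges, given as the cyclic list of its vertices
  P!0, ..., P!(n-1), can be domed.\<close>
definition can_be_domed :: "(real^3) list \<Rightarrow> bool" where
  "can_be_domed P \<longleftrightarrow>
     (\<exists>K (f :: nat \<Rightarrow> real^3) (w :: nat list).
        surface_complex K \<and>
        length w = length P \<and> distinct w \<and> set w \<subseteq> \<Union>K \<and>
        boundary_edges K = {{w ! i, w ! ((i + 1) mod length w)} | i. i < length w} \<and>
        (\<forall>T\<in>K. \<forall>a\<in>T. \<forall>b\<in>T. a \<noteq> b \<longrightarrow> dist (f a) (f b) = 1) \<and>
        (\<forall>i < length P. f (w ! i) = P ! i))"

definition rho_diamond :: "(real^3) list" where
  "rho_diamond = [vector [1/4, 0, 0], vector [0, sqrt 15 / 4, 0],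
                  vector [-1/4, 0, 0], vector [0, - sqrt 15 / 4, 0]]"

definition two_rho_diamond :: "(real^3) list" where
  "two_rho_diamond = [vector [1/2, 0, 0], vector [1/4, sqrt 15 / 4, 0],
                      vector [0, sqrt 15 / 2, 0], vector [-1/4, sqrt 15 / 4, 0],
                      vector [-1/2, 0, 0], vector [-1/4, - sqrt 15 / 4, 0],
                      vector [0, - sqrt 15 / 2, 0], vector [1/4, - sqrt 15 / 4, 0]]"

text \<open>The isosceles triangle with side lengths (2,2,1), subdivided into 5 unit edges.\<close>
definition tri221 :: "(real^3) list" where
  "tri221 = [vector [-1/2, 0, 0], vector [1/2, 0, 0], vector [1/4, sqrt 15 / 4, 0],
             vector [0, sqrt 15 / 2, 0], vector [-1/4, sqrt 15 / 4, 0]]"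

end

theory Submission
  imports Defs
begin

text \<open>Two domes whose boundary cycles run through a common arc can be glued along that arc,
  giving a dome over the cycle that goes around both. The only obstruction is that the two
  complexes might share more than the arc; but every shared edge is mapped to a unit segment
  between arc vertices, so if no two non-consecutive arc vertices are at unit distance the
  complexes meet exactly in the arc and their union is again a surface with one boundary cycle.
  The doubled rhombus is the union of the triangle (2,2,1) and its mirror image in the base,
  and also the union of four translates of the unit rhombus, glued along unit edges and finally
  along an arc of two edges whose endpoints are at distance 2. So a dome over the triangle or
  over the rhombus yields a dome over the doubled rhombus.\<close>

section \<open>Edges of paths and cycles\<close>

fun path_edges :: "'a list \<Rightarrow> 'a set set" where
  "path_edges (x # y # zs) = insert {x, y} (path_edges (y # zs))"
| "path_edges _ = {}"

definition cycle_edges :: "'a list \<Rightarrow> 'a set set" where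
  "cycle_edges w = {{w ! i, w ! ((i + 1) mod length w)} | i. i < length w}"

lemma path_edges_Cons:
  "path_edges (x # xs) = (if xs = [] then {} else insert {x, hd xs} (path_edges xs))"
  by (cases xs) auto

lemma path_edges_conv_nth: "path_edges xs = {{xs ! i, xs ! Suc i} | i. Suc i < length xs}"
proof (induction xs rule: path_edges.induct)
  case (1 x y zs)
  let ?xs = "x # y # zs"
  have "{{?xs ! i, ?xs ! Suc i} | i. Suc i < length ?xs}
      = insert {x, y} {{(y # zs) ! i, (y # zs) ! Suc i} | i. Suc i < length (y # zs)}"
    (is "?L = ?R")
  proof
    show "?L \<subseteq> ?R"
    proof
      fix e assume "e \<in> ?L"
      then obtain i where e: "e = {?xs ! i, ?xs ! Suc i}" and i: "Suc i < length ?xs" by blast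
      show "e \<in> ?R"
        using e i by (cases i) auto
    qed
    show "?R \<subseteq> ?L"
    proof
      fix e assume "e \<in> ?R"
      then consider "e = {x, y}" | i where "e = {?xs ! Suc i, ?xs ! Suc (Suc i)}" "Suc (Suc i) < length ?xs"
        by auto
      then show "e \<in> ?L"
        by cases (force, blast)
    qed
  qed
  then show ?case using 1 by simp
qed auto

lemma path_edges_append:
  "path_edges (xs @ ys) =
     path_edges xs \<union> path_edges ys \<union> (if xs = [] \<or> ys = [] then {} else {{last xs, hd ys}})"
  by (induction xs rule: path_edges.induct) (auto simp: path_edges_Cons)

lemma path_edges_map: "path_edges (map h xs) = (`) h ` path_edges xs"
  by (induction xs rule: path_edges.induct) auto

lemma path_edges_rev: "path_edges (rev xs) = path_edges xs"
  by (induction xs) (auto simp: path_edges_append path_edges_Cons last_rev insert_commute)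

lemma path_edges_subset_set: "e \<in> path_edges xs \<Longrightarrow> e \<subseteq> set xs"
  by (induction xs rule: path_edges.induct) auto

lemma path_edges_nonempty: "e \<in> path_edges xs \<Longrightarrow> e \<noteq> {}"
  by (induction xs rule: path_edges.induct) auto

lemma path_edges_covers:
  assumes "2 \<le> length xs" and "v \<in> set xs"
  shows "\<exists>u. {v, u} \<in> path_edges xs"
proof -
  obtain i where i: "i < length xs" "v = xs ! i"
    using assms(2) by (auto simp: in_set_conv_nth)
  show ?thesis
  proof (cases "Suc i < length xs")
    case True
    then show ?thesis using i by (auto simp: path_edges_conv_nth)
  next
    case False
    then have "xs ! i = xs ! Suc (i - 1)" "Suc (i - 1) < length xs"
      using i assms(1) by auto
    then show ?thesis using i by (auto simp: path_edges_conv_nth insert_commute)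
  qed
qed

lemma path_edges_triangle_free:
  assumes "distinct xs" and "{a, b} \<in> path_edges xs" "{b, c} \<in> path_edges xs" "{a, c} \<in> path_edges xs"
  shows "a = b \<or> b = c \<or> a = c"
proof -
  have adjacent:
    "\<exists>i j. i < length xs \<and> j < length xs \<and> p = xs ! i \<and> q = xs ! j \<and> (j = Suc i \<or> i = Suc j)"
    if "{p, q} \<in> path_edges xs" "p \<noteq> q" for p q
    using that by (auto simp: path_edges_conv_nth doubleton_eq_iff) (metis Suc_lessD)+
  show ?thesis
  proof (rule ccontr)
    assume "\<not> ?thesis"
    then obtain i j l where "i < length xs" "j < length xs" "l < length xs"
      "a = xs ! i" "b = xs ! j" "c = xs ! l"
      "j = Suc i \<or> i = Suc j" "l = Suc j \<or> j = Suc l" "l = Suc i \<or> i = Suc l"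
      using adjacent[OF assms(2)] adjacent[OF assms(3)] adjacent[OF assms(4)] assms(1)
      by (metis nth_eq_iff_index_eq)
    then show False by presburger
  qed
qed

lemma cycle_edges_conv_path_edges:
  assumes "w \<noteq> []"
  shows "cycle_edges w = insert {last w, hd w} (path_edges w)"
proof
  have last: "last w = w ! (length w - 1)" and hd: "hd w = w ! ((length w - 1 + 1) mod length w)"
    using assms by (simp_all add: last_conv_nth hd_conv_nth)
  show "cycle_edges w \<subseteq> insert {last w, hd w} (path_edges w)"
  proof
    fix e assume "e \<in> cycle_edges w"
    then obtain i where e: "e = {w ! i, w ! ((i + 1) mod length w)}" and i: "i < length w"
      unfolding cycle_edges_def by blast
    show "e \<in> insert {last w, hd w} (path_edges w)"
    proof (cases "Suc i < length w")
      case True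
      then show ?thesis using e by (auto simp: path_edges_conv_nth)
    next
      case False
      then have "i = length w - 1" using i by simp
      then show ?thesis using e last hd by simp
    qed
  qed
  show "insert {last w, hd w} (path_edges w) \<subseteq> cycle_edges w"
    using assms last hd unfolding cycle_edges_def path_edges_conv_nth
    by auto
qed

lemma cycle_edges_append:
  "xs \<noteq> [] \<Longrightarrow> ys \<noteq> [] \<Longrightarrow>
    cycle_edges (xs @ ys) = {{last ys, hd xs}, {last xs, hd ys}} \<union> path_edges xs \<union> path_edges ys"
  by (auto simp: cycle_edges_conv_path_edges path_edges_append)

lemma cycle_edges_rotate1: "cycle_edges (rotate1 w) = cycle_edges w"
proof (cases w)
  case (Cons x xs)
  then show ?thesis
    by (cases "xs = []") (auto simp: cycle_edges_conv_path_edges path_edges_append path_edges_Cons)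
qed simp

lemma cycle_edges_rev: "cycle_edges (rev w) = cycle_edges w"
  by (cases "w = []") (auto simp: cycle_edges_conv_path_edges path_edges_rev last_rev hd_rev)

lemma cycle_edges_map: "cycle_edges (map h w) = (`) h ` cycle_edges w"
  by (cases "w = []")
    (simp_all add: cycle_edges_def[of "[]"] cycle_edges_conv_path_edges path_edges_map last_map hd_map)

lemma cycle_edges_glue:
  assumes "s \<noteq> []" "x \<noteq> []" "y \<noteq> []" and disjoint: "set s \<inter> (set x \<union> set y) = {}"
  shows "cycle_edges (s @ x) \<union> cycle_edges (s @ y) - path_edges s
    = cycle_edges ([last s] @ x @ [hd s] @ rev y)"
proof -
  let ?w = "[last s] @ x @ [hd s] @ rev y"
  have new: "cycle_edges ?w
      = {{hd y, last s}, {last s, hd x}, {last x, hd s}, {hd s, last y}} \<union> path_edges x \<union> path_edges y"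
    using assms by (auto simp: cycle_edges_conv_path_edges path_edges_append path_edges_rev
        path_edges_Cons last_rev hd_rev)
  have union: "cycle_edges (s @ x) \<union> cycle_edges (s @ y) = cycle_edges ?w \<union> path_edges s"
    using assms unfolding new by (auto simp: cycle_edges_append insert_commute)
  have "e \<inter> (set x \<union> set y) \<noteq> {}" if "e \<in> cycle_edges ?w" for e
    using that assms path_edges_subset_set[of e x] path_edges_nonempty[of e x]
      path_edges_subset_set[of e y] path_edges_nonempty[of e y]
    unfolding new by auto
  then have "cycle_edges ?w \<inter> path_edges s = {}"
    using path_edges_subset_set[of _ s] disjoint by blast
  then show ?thesis
    unfolding union by blast
qed

section \<open>Relabelling and gluing surfaces\<close>

lemma rtranclp_map:
  assumes "\<And>x y. R x y \<Longrightarrow> R' (h x) (h y)" and "R\<^sup>*\<^sup>* a b"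
  shows "R'\<^sup>*\<^sup>* (h a) (h b)"
  using assms(2) by induction (auto intro: rtranclp.rtrancl_into_rtrancl assms(1))

lemma cedges_card: "e \<in> cedges K \<Longrightarrow> card e = 2"
  unfolding cedges_def by blast

lemma cedges_subset_Union: "e \<in> cedges K \<Longrightarrow> e \<subseteq> \<Union>K"
  unfolding cedges_def by blast

lemma boundary_edges_subset_cedges: "boundary_edges K \<subseteq> cedges K"
  unfolding boundary_edges_def by blast

lemma cedges_image:
  assumes inj: "inj_on h (\<Union>K)"
  shows "cedges ((`) h ` K) = (`) h ` cedges K"
proof
  have card: "card (h ` C) = card C" if "C \<subseteq> T" "T \<in> K" for C T
    using that inj by (intro card_image) (meson Union_upper inj_on_subset order_trans)
  show "cedges ((`) h ` K) \<subseteq> (`) h ` cedges K"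
  proof
    fix e assume "e \<in> cedges ((`) h ` K)"
    then obtain T where T: "T \<in> K" "e \<subseteq> h ` T" "card e = 2"
      unfolding cedges_def by blast
    then obtain C where C: "C \<subseteq> T" "e = h ` C"
      by (meson subset_imageE)
    then have "C \<in> cedges K"
      using T card[OF C(1) T(1)] unfolding cedges_def by auto
    then show "e \<in> (`) h ` cedges K"
      using C(2) by blast
  qed
  show "(`) h ` cedges K \<subseteq> cedges ((`) h ` K)"
  proof
    fix e assume "e \<in> (`) h ` cedges K"
    then obtain C T where "e = h ` C" "T \<in> K" "C \<subseteq> T" "card C = 2"
      unfolding cedges_def by blast
    then show "e \<in> cedges ((`) h ` K)"
      using card unfolding cedges_def by (auto intro!: bexI[of _ T] image_mono)
  qed
qed

lemma edge_degree_image: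
  assumes inj: "inj_on h (\<Union>K)" and "e \<subseteq> \<Union>K"
  shows "edge_degree ((`) h ` K) (h ` e) = edge_degree K e"
proof -
  have "h ` e \<subseteq> h ` T \<longleftrightarrow> e \<subseteq> T" if "T \<in> K" for T
    using that assms by (intro inj_on_image_subset_iff) auto
  then have "{T' \<in> (`) h ` K. h ` e \<subseteq> T'} = (`) h ` {T \<in> K. e \<subseteq> T}"
    by auto
  moreover have "inj_on ((`) h) {T \<in> K. e \<subseteq> T}"
    using inj_on_image[OF inj] by (rule inj_on_subset) auto
  ultimately show ?thesis
    unfolding edge_degree_def by (simp add: card_image)
qed

lemma boundary_edges_image:
  assumes "inj_on h (\<Union>K)"
  shows "boundary_edges ((`) h ` K) = (`) h ` boundary_edges K"
  using assms cedges_subset_Union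
  by (auto simp: boundary_edges_def cedges_image edge_degree_image)

lemma link_verts_image:
  assumes inj: "inj_on h (\<Union>K)" and v: "v \<in> \<Union>K"
  shows "link_verts ((`) h ` K) (h v) \<subseteq> h ` link_verts K v"
proof
  fix a assume "a \<in> link_verts ((`) h ` K) (h v)"
  then obtain e where e: "e \<in> cedges K" "{h v, a} = h ` e"
    unfolding link_verts_def cedges_image[OF inj] by auto
  then obtain p q where pq: "e = {p, q}" "p \<noteq> q"
    using cedges_card by (meson card_2_iff)
  have "p \<in> \<Union>K" "q \<in> \<Union>K"
    using e(1) cedges_subset_Union pq by blast+
  then have "h p \<noteq> h q"
    using inj pq by (meson inj_onD)
  then have "v = p \<and> a = h q \<or> v = q \<and> a = h p"
    using e(2) pq inj v \<open>p \<in> \<Union>K\<close> \<open>q \<in> \<Union>K\<close> by (auto simp: doubleton_eq_iff dest: inj_onD)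
  then show "a \<in> h ` link_verts K v"
    using e(1) pq by (auto simp: link_verts_def insert_commute)
qed

lemma link_adj_image:
  assumes "inj_on h (\<Union>K)" and "link_adj K v a b"
  shows "link_adj ((`) h ` K) (h v) (h a) (h b)"
proof -
  have T: "{v, a, b} \<in> K" "a \<noteq> b" "a \<noteq> v" "b \<noteq> v"
    using assms(2) unfolding link_adj_def by auto
  then have "inj_on h {v, a, b}"
    using assms(1) by (meson Union_upper inj_on_subset)
  then have "h a \<noteq> h b" "h a \<noteq> h v" "h b \<noteq> h v"
    using T(2-4) by (auto dest: inj_onD)
  moreover have "{h v, h a, h b} \<in> (`) h ` K"
    using imageI[OF T(1), of "(`) h"] by simp
  ultimately show ?thesis
    unfolding link_adj_def by blast
qed

lemma surface_complexI:
  assumes "finite K" "K \<noteq> {}" "\<And>T. T \<in> K \<Longrightarrow> card T = 3"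
    and "\<And>e. e \<in> cedges K \<Longrightarrow> edge_degree K e \<le> 2"
    and "\<And>v a b. v \<in> \<Union>K \<Longrightarrow> a \<in> link_verts K v \<Longrightarrow> b \<in> link_verts K v \<Longrightarrow>
      (link_adj K v)\<^sup>*\<^sup>* a b"
    and "\<And>u w. u \<in> \<Union>K \<Longrightarrow> w \<in> \<Union>K \<Longrightarrow> (\<lambda>x y. {x, y} \<in> cedges K)\<^sup>*\<^sup>* u w"
  shows "surface_complex K"
  using assms unfolding surface_complex_def by blast

lemma surface_complexD:
  assumes "surface_complex K"
  shows "finite K" "K \<noteq> {}" "T \<in> K \<Longrightarrow> card T = 3"
    and "e \<in> cedges K \<Longrightarrow> edge_degree K e \<le> 2"
    and "v \<in> \<Union>K \<Longrightarrow> a \<in> link_verts K v \<Longrightarrow> b \<in> link_verts K v \<Longrightarrow>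
      (link_adj K v)\<^sup>*\<^sup>* a b"
    and "u \<in> \<Union>K \<Longrightarrow> w \<in> \<Union>K \<Longrightarrow> (\<lambda>x y. {x, y} \<in> cedges K)\<^sup>*\<^sup>* u w"
  using assms unfolding surface_complex_def by blast+

lemma surface_complex_image:
  assumes inj: "inj_on h (\<Union>K)" and S: "surface_complex K"
  shows "surface_complex ((`) h ` K)"
proof (rule surface_complexI)
  show "finite ((`) h ` K)" "(`) h ` K \<noteq> {}"
    using surface_complexD(1,2)[OF S] by auto
  show "card T' = 3" if T': "T' \<in> (`) h ` K" for T'
  proof -
    obtain T where "T \<in> K" "T' = h ` T"
      using T' by blast
    moreover have "inj_on h T"
      using inj \<open>T \<in> K\<close> by (meson Union_upper inj_on_subset)
    ultimately show "card T' = 3"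
      using surface_complexD(3)[OF S] by (simp add: card_image)
  qed
  show "edge_degree ((`) h ` K) e' \<le> 2" if e': "e' \<in> cedges ((`) h ` K)" for e'
  proof -
    obtain e where "e \<in> cedges K" "e' = h ` e"
      using e' unfolding cedges_image[OF inj] by blast
    then show ?thesis
      using surface_complexD(4)[OF S] edge_degree_image[OF inj cedges_subset_Union[of e K]] by simp
  qed
  show "(link_adj ((`) h ` K) v')\<^sup>*\<^sup>* a' b'"
    if v': "v' \<in> \<Union>((`) h ` K)" and ab': "a' \<in> link_verts ((`) h ` K) v'" "b' \<in> link_verts ((`) h ` K) v'"
    for v' a' b'
  proof -
    obtain v where v: "v \<in> \<Union>K" "v' = h v"
      using v' by blast
    then obtain a b where ab: "a \<in> link_verts K v" "b \<in> link_verts K v" "a' = h a" "b' = h b"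
      using ab' link_verts_image[OF inj] by blast
    have "(link_adj ((`) h ` K) (h v))\<^sup>*\<^sup>* (h a) (h b)"
      using rtranclp_map[of "link_adj K v" "link_adj ((`) h ` K) (h v)" h, OF link_adj_image[OF inj]]
        surface_complexD(5)[OF S v(1) ab(1,2)] by blast
    then show ?thesis
      using ab v by simp
  qed
  show "(\<lambda>x y. {x, y} \<in> cedges ((`) h ` K))\<^sup>*\<^sup>* u' w'"
    if uw': "u' \<in> \<Union>((`) h ` K)" "w' \<in> \<Union>((`) h ` K)" for u' w'
  proof -
    obtain u w where uw: "u \<in> \<Union>K" "w \<in> \<Union>K" "u' = h u" "w' = h w"
      using uw' by blast
    have edge: "{h x, h y} \<in> cedges ((`) h ` K)" if "{x, y} \<in> cedges K" for x y
      using imageI[OF that, of "(`) h"] unfolding cedges_image[OF inj] by simp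
    have "(\<lambda>x y. {x, y} \<in> cedges ((`) h ` K))\<^sup>*\<^sup>* (h u) (h w)"
      using rtranclp_map[of "\<lambda>x y. {x, y} \<in> cedges K" "\<lambda>x y. {x, y} \<in> cedges ((`) h ` K)" h, OF edge]
        surface_complexD(6)[OF S uw(1,2)] by blast
    then show ?thesis
      using uw by simp
  qed
qed

lemma cedges_Un: "cedges (K1 \<union> K2) = cedges K1 \<union> cedges K2"
  unfolding cedges_def by blast

lemma link_verts_Un: "link_verts (K1 \<union> K2) v = link_verts K1 v \<union> link_verts K2 v"
  unfolding link_verts_def cedges_Un by blast

lemma link_adj_mono: "K1 \<subseteq> K2 \<Longrightarrow> link_adj K1 v a b \<Longrightarrow> link_adj K2 v a b"
  unfolding link_adj_def by blast

lemma edge_degree_Un: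
  assumes "finite K1" "finite K2" "K1 \<inter> K2 = {}"
  shows "edge_degree (K1 \<union> K2) e = edge_degree K1 e + edge_degree K2 e"
proof -
  have "{T \<in> K1 \<union> K2. e \<subseteq> T} = {T \<in> K1. e \<subseteq> T} \<union> {T \<in> K2. e \<subseteq> T}"
    by blast
  then show ?thesis
    unfolding edge_degree_def using assms by (simp add: card_Un_disjoint disjoint_iff)
qed

lemma edge_degree_eq_0:
  assumes "card e = 2" "e \<notin> cedges K"
  shows "edge_degree K e = 0"
proof -
  have "{T \<in> K. e \<subseteq> T} = {}"
    using assms unfolding cedges_def by blast
  then show ?thesis
    unfolding edge_degree_def by (simp only: card.empty)
qed

lemma edge_degree_glue:
  assumes "finite K1" "finite K2" "K1 \<inter> K2 = {}"
    and shared: "cedges K1 \<inter> cedges K2 \<subseteq> boundary_edges K1 \<inter> boundary_edges K2"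
    and e: "e \<in> cedges K1 \<union> cedges K2"
  shows "edge_degree (K1 \<union> K2) e =
    (if e \<in> cedges K1 \<inter> cedges K2 then 2 else if e \<in> cedges K1 then edge_degree K1 e else edge_degree K2 e)"
proof (cases "e \<in> cedges K1 \<inter> cedges K2")
  case True
  then have "edge_degree K1 e = 1" "edge_degree K2 e = 1"
    using shared unfolding boundary_edges_def by blast+
  then show ?thesis
    using True edge_degree_Un[OF assms(1-3)] by simp
next
  case False
  then show ?thesis
    using e cedges_card[of e] edge_degree_eq_0[of e] edge_degree_Un[OF assms(1-3)] by auto
qed

lemma boundary_edges_glue:
  assumes "finite K1" "finite K2" "K1 \<inter> K2 = {}"
    and shared: "cedges K1 \<inter> cedges K2 \<subseteq> boundary_edges K1 \<inter> boundary_edges K2"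
  shows "boundary_edges (K1 \<union> K2) = boundary_edges K1 \<union> boundary_edges K2 - cedges K1 \<inter> cedges K2"
proof (rule set_eqI)
  fix e
  show "e \<in> boundary_edges (K1 \<union> K2) \<longleftrightarrow> e \<in> boundary_edges K1 \<union> boundary_edges K2 - cedges K1 \<inter> cedges K2"
  proof (cases "e \<in> cedges K1 \<union> cedges K2")
    case True
    then show ?thesis
      using edge_degree_glue[OF assms True] unfolding boundary_edges_def cedges_Un by auto
  next
    case False
    then show ?thesis
      using boundary_edges_subset_cedges[of K1] boundary_edges_subset_cedges[of K2]
      unfolding boundary_edges_def cedges_Un by blast
  qed
qed

lemma link_connected_glue:
  assumes S1: "surface_complex K1" and S2: "surface_complex K2"
    and shared_vertex: "\<And>v. v \<in> \<Union>K1 \<Longrightarrow> v \<in> \<Union>K2 \<Longrightarrow> \<exists>c. {v, c} \<in> cedges K1 \<inter> cedges K2"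
    and a: "a \<in> link_verts (K1 \<union> K2) v" and b: "b \<in> link_verts (K1 \<union> K2) v"
  shows "(link_adj (K1 \<union> K2) v)\<^sup>*\<^sup>* a b"
proof -
  have in_Union: "v \<in> \<Union>K" if "x \<in> link_verts K v" for K x
    using that cedges_subset_Union unfolding link_verts_def by blast
  have link: "(link_adj (K1 \<union> K2) v)\<^sup>*\<^sup>* x y"
    if "x \<in> link_verts K v" "y \<in> link_verts K v" "surface_complex K" "K \<subseteq> K1 \<union> K2" for K x y
    using mono_rtranclp[of "link_adj K v" "link_adj (K1 \<union> K2) v"] link_adj_mono[OF that(4)]
      surface_complexD(5)[OF that(3) in_Union[OF that(1)] that(1,2)] by blast
  have link1: "(link_adj (K1 \<union> K2) v)\<^sup>*\<^sup>* x y" if "x \<in> link_verts K1 v" "y \<in> link_verts K1 v" for x y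
    using link[OF that S1] by blast
  have link2: "(link_adj (K1 \<union> K2) v)\<^sup>*\<^sup>* x y" if "x \<in> link_verts K2 v" "y \<in> link_verts K2 v" for x y
    using link[OF that S2] by blast
  show ?thesis
  proof (cases "a \<in> link_verts K1 v \<and> b \<in> link_verts K1 v \<or> a \<in> link_verts K2 v \<and> b \<in> link_verts K2 v")
    case True
    then show ?thesis
      using link1 link2 by blast
  next
    case False
    then have "v \<in> \<Union>K1" "v \<in> \<Union>K2"
      using a b unfolding link_verts_Un by (auto dest: in_Union)
    then obtain c where "c \<in> link_verts K1 v" "c \<in> link_verts K2 v"
      using shared_vertex unfolding link_verts_def by blast
    then show ?thesis
      using False a b link1 link2 unfolding link_verts_Un by (meson Un_iff rtranclp_trans)
  qed
qed

lemma edge_connected_glue: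
  assumes S1: "surface_complex K1" and S2: "surface_complex K2" and common: "\<Union>K1 \<inter> \<Union>K2 \<noteq> {}"
    and "u \<in> \<Union>(K1 \<union> K2)" "w \<in> \<Union>(K1 \<union> K2)"
  shows "(\<lambda>x y. {x, y} \<in> cedges (K1 \<union> K2))\<^sup>*\<^sup>* u w"
proof -
  let ?E = "\<lambda>x y. {x, y} \<in> cedges (K1 \<union> K2)"
  have path: "?E\<^sup>*\<^sup>* x y" if "x \<in> \<Union>K" "y \<in> \<Union>K" "surface_complex K" "K \<subseteq> K1 \<union> K2" for K x y
    using mono_rtranclp[of "\<lambda>x y. {x, y} \<in> cedges K" ?E] surface_complexD(6)[OF that(3,1,2)] that(4)
    unfolding cedges_Un by (metis Un_iff cedges_Un sup.absorb_iff1)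
  obtain z where "z \<in> \<Union>K1" "z \<in> \<Union>K2"
    using common by blast
  then have "?E\<^sup>*\<^sup>* x z" "?E\<^sup>*\<^sup>* z x" if "x \<in> \<Union>(K1 \<union> K2)" for x
    using that path[of x K1 z] path[of z K1 x] path[of x K2 z] path[of z K2 x] S1 S2 by auto
  then show ?thesis
    using assms(4,5) by (meson rtranclp_trans)
qed

lemma surface_complex_glue:
  assumes S1: "surface_complex K1" and S2: "surface_complex K2" and disjoint: "K1 \<inter> K2 = {}"
    and shared: "cedges K1 \<inter> cedges K2 \<subseteq> boundary_edges K1 \<inter> boundary_edges K2"
    and shared_vertex: "\<And>v. v \<in> \<Union>K1 \<Longrightarrow> v \<in> \<Union>K2 \<Longrightarrow> \<exists>c. {v, c} \<in> cedges K1 \<inter> cedges K2"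
    and common: "\<Union>K1 \<inter> \<Union>K2 \<noteq> {}"
  shows "surface_complex (K1 \<union> K2)"
proof (rule surface_complexI)
  show "finite (K1 \<union> K2)" "K1 \<union> K2 \<noteq> {}"
    using surface_complexD(1,2)[OF S1] surface_complexD(1)[OF S2] by auto
  show "card T = 3" if "T \<in> K1 \<union> K2" for T
    using that surface_complexD(3)[OF S1] surface_complexD(3)[OF S2] by blast
  show "edge_degree (K1 \<union> K2) e \<le> 2" if "e \<in> cedges (K1 \<union> K2)" for e
    using that edge_degree_glue[OF surface_complexD(1)[OF S1] surface_complexD(1)[OF S2] disjoint shared]
      surface_complexD(4)[OF S1] surface_complexD(4)[OF S2]
    unfolding cedges_Un by auto
  show "(link_adj (K1 \<union> K2) v)\<^sup>*\<^sup>* a b"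
    if "a \<in> link_verts (K1 \<union> K2) v" "b \<in> link_verts (K1 \<union> K2) v" for v a b
    using link_connected_glue[OF S1 S2 shared_vertex that] by blast
  show "(\<lambda>x y. {x, y} \<in> cedges (K1 \<union> K2))\<^sup>*\<^sup>* u w"
    if "u \<in> \<Union>(K1 \<union> K2)" "w \<in> \<Union>(K1 \<union> K2)" for u w
    by (rule edge_connected_glue[OF S1 S2 common that])
qed

section \<open>Domes\<close>

definition unit_equilateral :: "('a \<Rightarrow> 'b::metric_space) \<Rightarrow> 'a set set \<Rightarrow> bool" where
  "unit_equilateral f K \<longleftrightarrow> (\<forall>T\<in>K. \<forall>a\<in>T. \<forall>b\<in>T. a \<noteq> b \<longrightarrow> dist (f a) (f b) = 1)"

definition dome :: "nat set set \<Rightarrow> (nat \<Rightarrow> real^3) \<Rightarrow> nat list \<Rightarrow> (real^3) list \<Rightarrow> bool" where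
  "dome K f w P \<longleftrightarrow> surface_complex K \<and> distinct w \<and> set w \<subseteq> \<Union>K \<and>
     boundary_edges K = cycle_edges w \<and> unit_equilateral f K \<and> map f w = P"

lemma can_be_domed_iff_dome: "can_be_domed P \<longleftrightarrow> (\<exists>K f w. dome K f w P)"
proof -
  have map_iff: "map f w = P \<longleftrightarrow> length w = length P \<and> (\<forall>i < length P. f (w ! i) = P ! i)"
    for f :: "nat \<Rightarrow> real^3" and w
    by (auto simp: list_eq_iff_nth_eq)
  have "dome K f w P \<longleftrightarrow>
      surface_complex K \<and> length w = length P \<and> distinct w \<and> set w \<subseteq> \<Union>K \<and>
      boundary_edges K = {{w ! i, w ! ((i + 1) mod length w)} | i. i < length w} \<and>
      (\<forall>T\<in>K. \<forall>a\<in>T. \<forall>b\<in>T. a \<noteq> b \<longrightarrow> dist (f a) (f b) = 1) \<and>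
      (\<forall>i < length P. f (w ! i) = P ! i)" for K f w
    unfolding dome_def unit_equilateral_def cycle_edges_def map_iff by blast
  then show ?thesis
    unfolding can_be_domed_def by presburger
qed

lemma can_be_domed_rotate1:
  assumes "can_be_domed P"
  shows "can_be_domed (rotate1 P)"
proof -
  obtain K f w where "dome K f w P"
    using assms unfolding can_be_domed_iff_dome by blast
  then have "dome K f (rotate1 w) (rotate1 P)"
    unfolding dome_def by (auto simp: cycle_edges_rotate1 simp flip: rotate1_map)
  then show ?thesis
    unfolding can_be_domed_iff_dome by blast
qed

lemma can_be_domed_rev:
  assumes "can_be_domed P"
  shows "can_be_domed (rev P)"
proof -
  obtain K f w where "dome K f w P"
    using assms unfolding can_be_domed_iff_dome by blast
  then have "dome K f (rev w) (rev P)"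
    unfolding dome_def by (auto simp: cycle_edges_rev simp flip: rev_map)
  then show ?thesis
    unfolding can_be_domed_iff_dome by blast
qed

lemma can_be_domed_isometry:
  assumes "can_be_domed P" and "\<And>x y. dist (g x) (g y) = dist x y"
  shows "can_be_domed (map g P)"
proof -
  obtain K f w where "dome K f w P"
    using assms(1) unfolding can_be_domed_iff_dome by blast
  then have "dome K (g \<circ> f) w (map g P)"
    using assms(2) unfolding dome_def unit_equilateral_def by auto
  then show ?thesis
    unfolding can_be_domed_iff_dome by blast
qed

lemma dome_relabel:
  assumes dome: "dome K f w P" and inj: "inj_on h (\<Union>K)" and g: "\<And>x. x \<in> \<Union>K \<Longrightarrow> g (h x) = f x"
  shows "dome ((`) h ` K) g (map h w) P"
proof -
  have S: "surface_complex K" and w: "distinct w" "set w \<subseteq> \<Union>K" and bd: "boundary_edges K = cycle_edges w"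
    and unit: "unit_equilateral f K" and P: "map f w = P"
    using dome unfolding dome_def by blast+
  have distinct: "distinct (map h w)"
    using w inj by (simp add: distinct_map inj_on_subset)
  have map: "map g (map h w) = P"
  proof -
    have "\<forall>x\<in>set w. g (h x) = f x"
      using w g by blast
    then show ?thesis
      using P by (simp flip: P)
  qed
  have unit': "unit_equilateral g ((`) h ` K)"
    unfolding unit_equilateral_def
  proof (intro ballI impI)
    fix T' a' b' assume T': "T' \<in> (`) h ` K" "a' \<in> T'" "b' \<in> T'" "a' \<noteq> b'"
    then obtain T where T: "T \<in> K" "T' = h ` T"
      by blast
    then obtain a b where ab: "a \<in> T" "b \<in> T" "a' = h a" "b' = h b"
      using T' by blast
    then have "a \<noteq> b" "g a' = f a" "g b' = f b"
      using T T'(4) g by auto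
    then show "dist (g a') (g b') = 1"
      using unit T ab unfolding unit_equilateral_def by simp
  qed
  have set: "set (map h w) \<subseteq> \<Union>((`) h ` K)"
    using w by auto
  have bd': "boundary_edges ((`) h ` K) = cycle_edges (map h w)"
    by (simp add: boundary_edges_image[OF inj] bd cycle_edges_map)
  show ?thesis
    unfolding dome_def by (intro conjI surface_complex_image[OF inj S] distinct set bd' unit' map)
qed

lemma common_relabelling:
  fixes f1 f2 :: "nat \<Rightarrow> 'a"
  assumes s1: "distinct s1" and s2: "distinct s2" and agree: "map f1 s1 = map f2 s2"
  obtains h1 h2 :: "nat \<Rightarrow> nat" and g :: "nat \<Rightarrow> 'a"
  where "inj h1" "inj h2" "map h1 s1 = map h2 s2" "range h1 \<inter> range h2 \<subseteq> set (map h1 s1)"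
    "\<And>x. g (h1 x) = f1 x" "\<And>y. g (h2 y) = f2 y"
proof -
  have len: "length s2 = length s1"
    using agree by (metis length_map)
  \<comment> \<open>Even labels for the first complex, odd ones for the second, except on its arc \<open>s2\<close>,
    which takes the labels of the corresponding vertices of \<open>s1\<close>.\<close>
  define h1 :: "nat \<Rightarrow> nat" where "h1 x = 2 * x" for x
  define h2 :: "nat \<Rightarrow> nat"
    where "h2 y = (case map_of (zip s2 s1) y of Some x \<Rightarrow> 2 * x | None \<Rightarrow> 2 * y + 1)" for y
  define g where "g z = (if even z then f1 (z div 2) else f2 (z div 2))" for z
  have on_s2: "h2 (s2 ! j) = h1 (s1 ! j)" if "j < length s2" for j
    using that len s2 unfolding h1_def h2_def by (simp add: map_of_zip_nth)
  have off_s2: "h2 y = 2 * y + 1" if "y \<notin> set s2" for y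
  proof -
    have "map_of (zip s2 s1) y = None"
      using that by (auto simp: map_of_eq_None_iff dest: set_zip_leftD)
    then show ?thesis
      unfolding h2_def by simp
  qed
  have h2_cases: "(\<exists>j < length s2. y = s2 ! j \<and> h2 y = h1 (s1 ! j)) \<or> (y \<notin> set s2 \<and> h2 y = 2 * y + 1)" for y
  proof (cases "y \<in> set s2")
    case True
    then obtain j where "j < length s2" "y = s2 ! j"
      by (auto simp: in_set_conv_nth)
    then show ?thesis
      using on_s2 by auto
  qed (simp add: off_s2)
  have "inj h1"
    by (simp add: inj_def h1_def)
  moreover have "inj h2"
  proof (rule injI)
    fix y y' assume eq: "h2 y = h2 y'"
    from h2_cases[of y] h2_cases[of y'] show "y = y'"
    proof (elim disjE exE conjE)
      fix i j assume i: "i < length s2" "y = s2 ! i" "h2 y = h1 (s1 ! i)"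
        and j: "j < length s2" "y' = s2 ! j" "h2 y' = h1 (s1 ! j)"
      have "h1 (s1 ! i) = h1 (s1 ! j)"
        using eq i(3) j(3) by metis
      then have "i = j"
        using i(1) j(1) s1 len unfolding h1_def by (simp add: nth_eq_iff_index_eq)
      then show "y = y'"
        using i(2) j(2) by simp
    next
      fix i assume "h2 y = h1 (s1 ! i)" "h2 y' = 2 * y' + 1"
      then have "2 * (s1 ! i) = 2 * y' + 1"
        using eq unfolding h1_def by metis
      then show "y = y'"
        by (simp add: double_not_eq_Suc_double)
    next
      fix j assume "h2 y = 2 * y + 1" "h2 y' = h1 (s1 ! j)"
      then have "2 * y + 1 = 2 * (s1 ! j)"
        using eq unfolding h1_def by metis
      then show "y = y'"
        by (simp add: Suc_double_not_eq_double)
    next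
      assume "h2 y = 2 * y + 1" "h2 y' = 2 * y' + 1"
      then have "2 * y + 1 = 2 * y' + 1"
        using eq by metis
      then show "y = y'"
        by simp
    qed
  qed
  moreover have "map h1 s1 = map h2 s2"
    using on_s2 len by (simp add: list_eq_iff_nth_eq)
  moreover have "range h1 \<inter> range h2 \<subseteq> set (map h1 s1)"
  proof
    fix z assume "z \<in> range h1 \<inter> range h2"
    then obtain x y where z: "z = h1 x" "z = h2 y"
      by blast
    from h2_cases[of y] show "z \<in> set (map h1 s1)"
    proof (elim disjE exE conjE)
      fix j assume j: "j < length s2" "h2 y = h1 (s1 ! j)"
      then have "z = h1 (s1 ! j)"
        using z(2) by simp
      then show ?thesis
        using j(1) len by simp
    next
      assume "h2 y = 2 * y + 1"
      then show ?thesis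
        using z unfolding h1_def by (simp add: double_not_eq_Suc_double Suc_double_not_eq_double)
    qed
  qed
  moreover have "g (h1 x) = f1 x" for x
    unfolding g_def h1_def by simp
  moreover have "g (h2 y) = f2 y" for y
    using h2_cases[of y]
  proof (elim disjE exE conjE)
    fix j assume j: "j < length s2" "y = s2 ! j" "h2 y = h1 (s1 ! j)"
    have "f1 (s1 ! j) = f2 (s2 ! j)"
      using agree j(1) len by (metis nth_map)
    then show ?thesis
      using j unfolding g_def h1_def by simp
  qed (simp add: g_def)
  ultimately show ?thesis
    by (rule that)
qed

definition unit_distances_consecutive :: "'a::metric_space list \<Rightarrow> bool" where
  "unit_distances_consecutive S \<longleftrightarrow>
     (\<forall>i < length S. \<forall>j < length S. dist (S ! i) (S ! j) = 1 \<longrightarrow> j = Suc i \<or> i = Suc j)"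

lemma unit_pair_in_path_edges:
  assumes "unit_distances_consecutive (map f s)" and "a \<in> set s" "b \<in> set s" "dist (f a) (f b) = 1"
  shows "{a, b} \<in> path_edges s"
proof -
  obtain i j where "i < length s" "j < length s" "a = s ! i" "b = s ! j"
    using assms(2,3) by (metis in_set_conv_nth)
  then have "j = Suc i \<or> i = Suc j"
    using assms(1,4) unfolding unit_distances_consecutive_def by auto
  then show ?thesis
    using \<open>i < length s\<close> \<open>j < length s\<close> \<open>a = s ! i\<close> \<open>b = s ! j\<close>
    unfolding path_edges_conv_nth by (auto simp: insert_commute)
qed

lemma distinct_glue_cycle:
  assumes "distinct (s @ x)" "distinct (s @ y)" "set x \<inter> set y = {}" "2 \<le> length s"
  shows "distinct ([last s] @ x @ [hd s] @ rev y)"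
proof -
  have "s \<noteq> []"
    using assms(4) by auto
  then have "last s = s ! (length s - 1)" "hd s = s ! 0"
    by (simp_all add: last_conv_nth hd_conv_nth)
  moreover have "distinct s"
    using assms(1) by simp
  ultimately have "last s \<noteq> hd s"
    using nth_eq_iff_index_eq[of s "length s - 1" 0] assms(4) \<open>s \<noteq> []\<close> by simp
  moreover have "last s \<in> set s" "hd s \<in> set s"
    using \<open>s \<noteq> []\<close> by auto
  ultimately show ?thesis
    using assms(1-3) by auto
qed

lemma path_edges_subset_boundary:
  assumes "dome K f (s @ x) P" "s \<noteq> []" "x \<noteq> []"
  shows "path_edges s \<subseteq> boundary_edges K"
  using assms unfolding dome_def by (auto simp: cycle_edges_append)

lemma shared_edges_of_domes:
  assumes d1: "dome K1 f (s @ x) P1" and d2: "dome K2 f (s @ y) P2"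
    and shared: "\<Union>K1 \<inter> \<Union>K2 \<subseteq> set s" and ne: "s \<noteq> []" "x \<noteq> []" "y \<noteq> []"
    and consecutive: "unit_distances_consecutive (map f s)"
  shows "cedges K1 \<inter> cedges K2 = path_edges s"
proof
  show "cedges K1 \<inter> cedges K2 \<subseteq> path_edges s"
  proof
    fix e assume e: "e \<in> cedges K1 \<inter> cedges K2"
    then obtain T where T: "T \<in> K1" "e \<subseteq> T" and "card e = 2"
      unfolding cedges_def by blast
    then obtain a b where ab: "e = {a, b}" "a \<noteq> b"
      by (meson card_2_iff)
    have "e \<subseteq> set s"
      using e shared cedges_subset_Union by blast
    moreover have "dist (f a) (f b) = 1"
      using d1 T ab unfolding dome_def unit_equilateral_def by blast
    ultimately show "e \<in> path_edges s"
      using unit_pair_in_path_edges[OF consecutive] ab by simp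
  qed
  show "path_edges s \<subseteq> cedges K1 \<inter> cedges K2"
    using path_edges_subset_boundary[OF d1 ne(1,2)] path_edges_subset_boundary[OF d2 ne(1,3)]
      boundary_edges_subset_cedges by blast
qed

lemma disjoint_if_shared_edges_path:
  assumes triangles: "\<And>T. T \<in> K1 \<Longrightarrow> card T = 3"
    and shared: "cedges K1 \<inter> cedges K2 = path_edges s" and "distinct s"
  shows "K1 \<inter> K2 = {}"
proof (rule ccontr)
  assume "K1 \<inter> K2 \<noteq> {}"
  then obtain T where T: "T \<in> K1" "T \<in> K2"
    by blast
  then obtain a b c where abc: "T = {a, b, c}" "a \<noteq> b" "b \<noteq> c" "a \<noteq> c"
    using triangles by (meson card_3_iff)
  have "{p, q} \<in> path_edges s" if "p \<in> T" "q \<in> T" "p \<noteq> q" for p q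
    using T that shared unfolding cedges_def by auto
  then have "{a, b} \<in> path_edges s" "{b, c} \<in> path_edges s" "{a, c} \<in> path_edges s"
    using abc by auto
  then show False
    using path_edges_triangle_free[OF \<open>distinct s\<close>] abc by blast
qed

lemma glue_domes:
  assumes d1: "dome K1 f (s @ x) P1" and d2: "dome K2 f (s @ y) P2"
    and shared: "\<Union>K1 \<inter> \<Union>K2 \<subseteq> set s" and s: "2 \<le> length s" and ne: "x \<noteq> []" "y \<noteq> []"
    and consecutive: "unit_distances_consecutive (map f s)"
  shows "dome (K1 \<union> K2) f ([last s] @ x @ [hd s] @ rev y) (map f ([last s] @ x @ [hd s] @ rev y))"
proof -
  have S1: "surface_complex K1" and w1: "distinct (s @ x)" "set (s @ x) \<subseteq> \<Union>K1"
    and b1: "boundary_edges K1 = cycle_edges (s @ x)" and u1: "unit_equilateral f K1"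
    using d1 unfolding dome_def by blast+
  have S2: "surface_complex K2" and w2: "distinct (s @ y)" "set (s @ y) \<subseteq> \<Union>K2"
    and b2: "boundary_edges K2 = cycle_edges (s @ y)" and u2: "unit_equilateral f K2"
    using d2 unfolding dome_def by blast+
  have "s \<noteq> []"
    using s by auto
  have shared_edges: "cedges K1 \<inter> cedges K2 = path_edges s"
    by (rule shared_edges_of_domes[OF d1 d2 shared \<open>s \<noteq> []\<close> ne consecutive])
  have disjoint: "K1 \<inter> K2 = {}"
    using disjoint_if_shared_edges_path[OF surface_complexD(3)[OF S1] shared_edges] w1 by simp
  have on_boundary: "cedges K1 \<inter> cedges K2 \<subseteq> boundary_edges K1 \<inter> boundary_edges K2"
    unfolding shared_edges
    using path_edges_subset_boundary[OF d1 \<open>s \<noteq> []\<close> ne(1)]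
      path_edges_subset_boundary[OF d2 \<open>s \<noteq> []\<close> ne(2)]
    by blast
  have shared_vertex: "\<exists>c. {v, c} \<in> cedges K1 \<inter> cedges K2" if "v \<in> \<Union>K1" "v \<in> \<Union>K2" for v
    using path_edges_covers[OF s] that shared unfolding shared_edges by blast
  have common: "\<Union>K1 \<inter> \<Union>K2 \<noteq> {}"
    using w1(2) w2(2) hd_in_set[OF \<open>s \<noteq> []\<close>] by auto
  have surface: "surface_complex (K1 \<union> K2)"
    by (rule surface_complex_glue[OF S1 S2 disjoint on_boundary shared_vertex common])
  have boundary: "boundary_edges (K1 \<union> K2) = cycle_edges ([last s] @ x @ [hd s] @ rev y)"
    using boundary_edges_glue[OF surface_complexD(1)[OF S1] surface_complexD(1)[OF S2] disjoint on_boundary]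
      cycle_edges_glue[OF \<open>s \<noteq> []\<close> ne] w1(1) w2(1)
    unfolding b1 b2 shared_edges by auto
  have "set x \<inter> set y = {}"
    using w1 w2 shared by auto
  then have distinct: "distinct ([last s] @ x @ [hd s] @ rev y)"
    by (rule distinct_glue_cycle[OF w1(1) w2(1) _ s])
  have vertices: "set ([last s] @ x @ [hd s] @ rev y) \<subseteq> \<Union>(K1 \<union> K2)"
    using w1(2) w2(2) last_in_set[OF \<open>s \<noteq> []\<close>] hd_in_set[OF \<open>s \<noteq> []\<close>] by (simp; blast)
  have unit: "unit_equilateral f (K1 \<union> K2)"
    using u1 u2 unfolding unit_equilateral_def by blast
  show ?thesis
    unfolding dome_def by (intro conjI surface distinct vertices boundary unit refl)
qed

lemma can_be_domed_glue:
  fixes S X Y :: "(real^3) list"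
  assumes "can_be_domed (S @ X)" and "can_be_domed (S @ Y)"
    and "2 \<le> length S" "X \<noteq> []" "Y \<noteq> []" and consecutive: "unit_distances_consecutive S"
  shows "can_be_domed ([last S] @ X @ [hd S] @ rev Y)"
proof -
  obtain K1 f1 w1 K2 f2 w2 where d1: "dome K1 f1 w1 (S @ X)" and d2: "dome K2 f2 w2 (S @ Y)"
    using assms(1,2) unfolding can_be_domed_iff_dome by blast
  define s1 where "s1 = take (length S) w1"
  define x1 where "x1 = drop (length S) w1"
  define s2 where "s2 = take (length S) w2"
  define x2 where "x2 = drop (length S) w2"
  have w: "w1 = s1 @ x1" "w2 = s2 @ x2"
    unfolding s1_def x1_def s2_def x2_def by simp_all
  have maps: "map f1 s1 = S" "map f1 x1 = X" "map f2 s2 = S" "map f2 x2 = Y"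
    using d1 d2 unfolding dome_def s1_def x1_def s2_def x2_def by (auto simp flip: take_map drop_map)
  have "distinct s1" "distinct s2"
    using d1 d2 unfolding dome_def w by simp_all
  moreover have "map f1 s1 = map f2 s2"
    using maps by simp
  ultimately obtain h1 h2 :: "nat \<Rightarrow> nat" and g :: "nat \<Rightarrow> real^3"
    where inj: "inj h1" "inj h2" and common: "map h1 s1 = map h2 s2"
      and meet: "range h1 \<inter> range h2 \<subseteq> set (map h1 s1)"
      and g: "\<And>x. g (h1 x) = f1 x" "\<And>y. g (h2 y) = f2 y"
    using common_relabelling by blast
  define s where "s = map h1 s1"
  have e1: "dome ((`) h1 ` K1) g (s @ map h1 x1) (S @ X)"
    using dome_relabel[OF d1 inj_on_subset[OF inj(1)] g(1)] unfolding w s_def by simp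
  have e2: "dome ((`) h2 ` K2) g (s @ map h2 x2) (S @ Y)"
    using dome_relabel[OF d2 inj_on_subset[OF inj(2)] g(2)] unfolding w s_def common by simp
  have gs: "map g s = S"
    unfolding s_def using maps(1) g(1) by (simp add: comp_def)
  have gx: "map g (map h1 x1) = X" "map g (map h2 x2) = Y"
    using maps g by (simp_all add: comp_def)
  have "\<Union>((`) h1 ` K1) \<inter> \<Union>((`) h2 ` K2) \<subseteq> set s"
    using meet unfolding s_def by blast
  moreover have "2 \<le> length s" "map h1 x1 \<noteq> []" "map h2 x2 \<noteq> []"
    using assms(3-5) gs gx by auto
  ultimately have "dome ((`) h1 ` K1 \<union> (`) h2 ` K2) g ([last s] @ map h1 x1 @ [hd s] @ rev (map h2 x2))
      (map g ([last s] @ map h1 x1 @ [hd s] @ rev (map h2 x2)))"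
    using glue_domes[OF e1 e2] consecutive gs by blast
  moreover have "map g ([last s] @ map h1 x1 @ [hd s] @ rev (map h2 x2)) = [last S] @ X @ [hd S] @ rev Y"
  proof -
    have "s \<noteq> []"
      using \<open>2 \<le> length s\<close> by auto
    then show ?thesis
      using gx by (simp add: last_map hd_map flip: gs rev_map)
  qed
  ultimately show ?thesis
    unfolding can_be_domed_iff_dome by metis
qed

section \<open>The doubled rhombus\<close>

lemma unit_distances_consecutive_pair: "length S = 2 \<Longrightarrow> unit_distances_consecutive S"
  unfolding unit_distances_consecutive_def by (auto simp: less_2_cases_iff)

lemma unit_distances_consecutive_triple:
  assumes "length S = 3" and "dist (S ! 0) (S ! 2) \<noteq> 1"
  shows "unit_distances_consecutive S"
  using assms unfolding unit_distances_consecutive_def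
  by (auto simp: numeral_3_eq_3 numeral_2_eq_2 less_Suc_eq dist_commute)

lemma vector3_add: "vector [a, b, c] + (vector [d, e, g] :: real^3) = vector [a + d, b + e, c + g]"
  by (simp add: vec_eq_iff forall_3)

lemma dist_vector3:
  "dist (vector [a, b, c]) (vector [d, e, g] :: real^3) = sqrt ((a - d)\<^sup>2 + (b - e)\<^sup>2 + (c - g)\<^sup>2)"
  by (simp add: dist_vec_def L2_set_def sum_3 dist_real_def)

definition reflect_y :: "real^3 \<Rightarrow> real^3" where
  "reflect_y x = (\<chi> i. if i = 2 then - x $ i else x $ i)"

lemma reflect_y_vector: "reflect_y (vector [a, b, c]) = vector [a, - b, c]"
  by (simp add: reflect_y_def vec_eq_iff forall_3)

lemma dist_reflect_y: "dist (reflect_y x) (reflect_y y) = dist x y"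
proof -
  have "dist (reflect_y x $ i) (reflect_y y $ i) = dist (x $ i) (y $ i)" for i
    by (simp add: reflect_y_def dist_real_def abs_minus_commute)
  then show ?thesis
    unfolding dist_vec_def by simp
qed

lemma can_be_domed_two_rho_diamond_if_tri221:
  assumes "can_be_domed tri221"
  shows "can_be_domed two_rho_diamond"
proof -
  let ?A = "vector [1/2, 0, 0] :: real^3" and ?E = "vector [-1/2, 0, 0] :: real^3"
  let ?B = "vector [1/4, sqrt 15 / 4, 0] :: real^3" and ?C = "vector [0, sqrt 15 / 2, 0] :: real^3"
    and ?D = "vector [-1/4, sqrt 15 / 4, 0] :: real^3"
  let ?F = "vector [-1/4, - sqrt 15 / 4, 0] :: real^3" and ?G = "vector [0, - sqrt 15 / 2, 0] :: real^3"
    and ?H = "vector [1/4, - sqrt 15 / 4, 0] :: real^3"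
  have upper: "can_be_domed ([?E, ?A] @ [?B, ?C, ?D])"
    using assms by (simp add: tri221_def)
  have lower: "can_be_domed ([?E, ?A] @ [?H, ?G, ?F])"
    using can_be_domed_isometry[OF assms dist_reflect_y] by (simp add: tri221_def reflect_y_vector)
  have "can_be_domed ([last [?E, ?A]] @ [?B, ?C, ?D] @ [hd [?E, ?A]] @ rev [?H, ?G, ?F])"
    by (rule can_be_domed_glue[OF upper lower]) (simp_all add: unit_distances_consecutive_pair)
  then show ?thesis
    by (simp add: two_rho_diamond_def)
qed

lemma can_be_domed_two_rho_diamond_if_rho_diamond:
  assumes "can_be_domed rho_diamond"
  shows "can_be_domed two_rho_diamond"
proof -
  let ?O = "vector [0, 0, 0] :: real^3"
  let ?A = "vector [1/2, 0, 0] :: real^3" and ?E = "vector [-1/2, 0, 0] :: real^3"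
  let ?B = "vector [1/4, sqrt 15 / 4, 0] :: real^3" and ?C = "vector [0, sqrt 15 / 2, 0] :: real^3"
    and ?D = "vector [-1/4, sqrt 15 / 4, 0] :: real^3"
  let ?F = "vector [-1/4, - sqrt 15 / 4, 0] :: real^3" and ?G = "vector [0, - sqrt 15 / 2, 0] :: real^3"
    and ?H = "vector [1/4, - sqrt 15 / 4, 0] :: real^3"
  have translate: "can_be_domed (map (\<lambda>x. x + c) rho_diamond)" for c
    by (rule can_be_domed_isometry[OF assms dist_add_cancel2])
  have right: "can_be_domed [?A, ?B, ?O, ?H]"
    using translate[of "vector [1/4, 0, 0]"] by (simp add: rho_diamond_def vector3_add)
  have top: "can_be_domed [?B, ?C, ?D, ?O]"
    using translate[of "vector [0, sqrt 15 / 4, 0]"] by (simp add: rho_diamond_def vector3_add)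
  have left: "can_be_domed [?O, ?D, ?E, ?F]"
    using translate[of "vector [-1/4, 0, 0]"] by (simp add: rho_diamond_def vector3_add)
  have bottom: "can_be_domed [?H, ?O, ?F, ?G]"
    using translate[of "vector [0, - sqrt 15 / 4, 0]"] by (simp add: rho_diamond_def vector3_add)
  have "can_be_domed ([last [?B, ?O]] @ [?H, ?A] @ [hd [?B, ?O]] @ rev [?D, ?C])"
  proof (rule can_be_domed_glue)
    show "can_be_domed ([?B, ?O] @ [?H, ?A])"
      using can_be_domed_rotate1[OF right] by simp
    show "can_be_domed ([?B, ?O] @ [?D, ?C])"
      using can_be_domed_rotate1[OF can_be_domed_rotate1[OF can_be_domed_rotate1[OF can_be_domed_rev[OF top]]]]
      by simp
  qed (simp_all add: unit_distances_consecutive_pair)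
  then have upper: "can_be_domed [?O, ?H, ?A, ?B, ?C, ?D]"
    by simp
  have "can_be_domed ([last [?F, ?O]] @ [?D, ?E] @ [hd [?F, ?O]] @ rev [?H, ?G])"
  proof (rule can_be_domed_glue)
    show "can_be_domed ([?F, ?O] @ [?D, ?E])"
      using can_be_domed_rotate1[OF can_be_domed_rotate1[OF can_be_domed_rotate1[OF left]]] by simp
    show "can_be_domed ([?F, ?O] @ [?H, ?G])"
      using can_be_domed_rotate1[OF can_be_domed_rev[OF bottom]] by simp
  qed (simp_all add: unit_distances_consecutive_pair)
  then have lower: "can_be_domed [?O, ?D, ?E, ?F, ?G, ?H]"
    by simp
  have "can_be_domed ([last [?D, ?O, ?H]] @ [?A, ?B, ?C] @ [hd [?D, ?O, ?H]] @ rev [?G, ?F, ?E])"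
  proof (rule can_be_domed_glue)
    show "can_be_domed ([?D, ?O, ?H] @ [?A, ?B, ?C])"
      using can_be_domed_rotate1[OF can_be_domed_rotate1[OF can_be_domed_rotate1[OF
          can_be_domed_rotate1[OF can_be_domed_rotate1[OF upper]]]]] by simp
    show "can_be_domed ([?D, ?O, ?H] @ [?G, ?F, ?E])"
      using can_be_domed_rotate1[OF can_be_domed_rotate1[OF can_be_domed_rotate1[OF
          can_be_domed_rotate1[OF can_be_domed_rev[OF lower]]]]] by simp
    have "dist ?D ?H = 2"
      by (simp add: dist_vector3 power2_eq_square)
    then show "unit_distances_consecutive [?D, ?O, ?H]"
      by (intro unit_distances_consecutive_triple) simp_all
  qed simp_all
  then have "can_be_domed [?H, ?A, ?B, ?C, ?D, ?E, ?F, ?G]"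
    by simp
  then have "can_be_domed (rotate1 [?H, ?A, ?B, ?C, ?D, ?E, ?F, ?G])"
    by (rule can_be_domed_rotate1)
  then show ?thesis
    by (simp add: two_rho_diamond_def)
qed

theorem mainTheorem18:
  assumes "\<not> can_be_domed two_rho_diamond"
  shows "\<not> can_be_domed tri221 \<and> \<not> can_be_domed rho_diamond"
  using assms can_be_domed_two_rho_diamond_if_tri221 can_be_domed_two_rho_diamond_if_rho_diamond
  by blast

end
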